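(* Let $X$ be a compactum, $Y$ a compactum in the Hilbert cube $I^\infty$, and $Y_1\supset Y_2\supset\cdots$ compact neighbourhoods of $Y$ in $I^\infty$ which are prisms, with $\bigcap_kY_k=Y$ and $p_k:Y_{k+1}\to Y_k$ the inclusions. Given an approximative map $\{f_k\}_{k\in\mathbb{N}}$ with $f_k:X\to Y_k$, there exists an approximative map $\{f'_k\}_{k\in\mathbb{N}}$ with $f'_k:X\to Y_k$ such that $p_k\circ f'_{k+1}\simeq f'_k$ in $Y_k$ for all $k\in\mathbb{N}$ and $\{f_k\}\simeq\{f'_k\}$.
   Context: A compactum is a compact metric space. A prism is a space homeomorphic to $P\times I^\infty$ with $P$ a compact polyhedron. An approximative map of $X$ towards $Y$ (relative to $(Y_k)$) is a sequence of continuous maps $f_k:X\to Y_k$ such that for every $N$ there is $m(N)$ with $p_t\circ f_{t+1}\simeq f_t$ in $Y_N$ (i.e. homotopic as maps into $Y_N$) for all $t\ge m(N)$. Two approximative maps $\{f_k\},\{g_k\}$ are homotopic, $\{f_k\}\simeq\{g_k\}$, if for every neighbourhood $V$ of $Y$ in $I^\infty$ there is $k_0$ with $f_k\simeq g_k$ in $V$ for all $k\ge k_0$. *)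

theory Defs
  imports "HOL-Analysis.Analysis"
begin

definition hilbert_cube :: "(nat \<Rightarrow> real) topology" where
  "hilbert_cube = product_topology (\<lambda>_. top_of_set {0..1::real}) (UNIV :: nat set)"

definition compactum :: "'a topology \<Rightarrow> bool" where
  "compactum X \<longleftrightarrow> compact_space X \<and> metrizable_space X"

text \<open>R^n is realised inside nat => real as the sequences vanishing from index n on.
  Convex hull of a finite set of points, written out coordinatewise.\<close>
definition conv_hull_seq :: "(nat \<Rightarrow> real) set \<Rightarrow> (nat \<Rightarrow> real) set" where
  "conv_hull_seq V = {x. \<exists>c. (\<forall>v\<in>V. 0 \<le> c v) \<and> sum c V = 1 \<and> x = (\<lambda>i. \<Sum>v\<in>V. c v * v i)}"

definition compact_polyhedron :: "(nat \<Rightarrow> real) set \<Rightarrow> bool" where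
  "compact_polyhedron P \<longleftrightarrow>
     (\<exists>n F. finite F \<and> (\<forall>V\<in>F. finite V \<and> V \<noteq> {} \<and> V \<subseteq> {x. \<forall>i\<ge>n. x i = 0})
            \<and> P = \<Union>(conv_hull_seq ` F))"

definition prism :: "'a topology \<Rightarrow> bool" where
  "prism T \<longleftrightarrow> (\<exists>P. compact_polyhedron P \<and>
      T homeomorphic_space prod_topology (subtopology (powertop_real UNIV) P) hilbert_cube)"

definition homotopic_in :: "'a topology \<Rightarrow> (nat \<Rightarrow> real) set \<Rightarrow> ('a \<Rightarrow> nat \<Rightarrow> real) \<Rightarrow> ('a \<Rightarrow> nat \<Rightarrow> real) \<Rightarrow> bool" where
  "homotopic_in X S f g \<longleftrightarrow> homotopic_with (\<lambda>_. True) X (subtopology hilbert_cube S) f g"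

definition approximative_map :: "'a topology \<Rightarrow> (nat \<Rightarrow> (nat \<Rightarrow> real) set) \<Rightarrow> (nat \<Rightarrow> 'a \<Rightarrow> nat \<Rightarrow> real) \<Rightarrow> bool" where
  "approximative_map X Ys f \<longleftrightarrow>
     (\<forall>k. continuous_map X (subtopology hilbert_cube (Ys k)) (f k)) \<and>
     (\<forall>N. \<exists>m. \<forall>t\<ge>m. homotopic_in X (Ys N) (f (Suc t)) (f t))"

definition approx_homotopic :: "'a topology \<Rightarrow> (nat \<Rightarrow> real) set \<Rightarrow> (nat \<Rightarrow> 'a \<Rightarrow> nat \<Rightarrow> real) \<Rightarrow> (nat \<Rightarrow> 'a \<Rightarrow> nat \<Rightarrow> real) \<Rightarrow> bool" where
  "approx_homotopic X Y f g \<longleftrightarrow>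
     (\<forall>V. V \<subseteq> topspace hilbert_cube \<and> (\<exists>U. openin hilbert_cube U \<and> Y \<subseteq> U \<and> U \<subseteq> V) \<longrightarrow>
        (\<exists>k0. \<forall>k\<ge>k0. homotopic_in X V (f k) (g k)))"

end

theory Submission
  imports Defs
begin

text \<open>Since the \<open>Y\<^sub>k\<close> decrease, the homotopies of an approximative map compose into
  the coherence \<open>f\<^sub>t \<simeq> f\<^sub>s\<close> in \<open>Y\<^sub>N\<close> for all \<open>t \<ge> s\<close> beyond some monotone modulus \<open>m N \<ge> N\<close>.
  Passing to the subsequence \<open>f'\<^sub>k = f\<^bsub>m k\<^esub>\<close> makes every bonding square commute up to homotopy
  in \<open>Y\<^sub>k\<close>, and \<open>f'\<^sub>k \<simeq> f\<^sub>k\<close> in \<open>Y\<^sub>K\<close> for large \<open>k\<close>. Finally every neighbourhood of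
  \<open>Y = \<Inter>Y\<^sub>k\<close> contains some \<open>Y\<^sub>K\<close> by compactness, so \<open>{f\<^sub>k} \<simeq> {f'\<^sub>k}\<close>.\<close>

lemma homotopic_in_mono:
  assumes "homotopic_in X S f g" "S \<subseteq> T"
  shows "homotopic_in X T f g"
  using assms unfolding homotopic_in_def homotopic_with_def
  by (auto simp: continuous_map_in_subtopology)

lemma homotopic_in_sym: "homotopic_in X S f g \<longleftrightarrow> homotopic_in X S g f"
  unfolding homotopic_in_def by (rule homotopic_with_sym)

lemma homotopic_in_chain:
  assumes "a \<le> b" "continuous_map X (subtopology hilbert_cube S) (f a)"
    and "\<And>t. a \<le> t \<Longrightarrow> t < b \<Longrightarrow> homotopic_in X S (f (Suc t)) (f t)"
  shows "homotopic_in X S (f b) (f a)"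
  using assms(1,3)
proof (induction b rule: dec_induct)
  case base
  then show ?case using assms(2) by (simp add: homotopic_in_def)
next
  case (step n)
  then have "homotopic_in X S (f n) (f a)" "homotopic_in X S (f (Suc n)) (f n)"
    by auto
  then show ?case unfolding homotopic_in_def using homotopic_with_trans by blast
qed

lemma Hausdorff_space_hilbert_cube: "Hausdorff_space hilbert_cube"
  unfolding hilbert_cube_def
  by (metis Hausdorff_space_euclidean Hausdorff_space_product_topology Hausdorff_space_subtopology)

lemma decseq_closedin_eventually_subset:
  assumes "compactin X (A 0)" "\<And>n. closedin X (A n)" "decseq A"
    and "openin X U" "(\<Inter>n. A n) \<subseteq> U"
  obtains n where "A n \<subseteq> U"
proof (rule ccontr)
  assume "\<not> thesis"
  with that have nonempty: "A n - U \<noteq> {}" for n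
    by blast
  have "A n \<subseteq> A 0" for n
    using \<open>decseq A\<close> by (simp add: decseq_def)
  then have "closedin (subtopology X (A 0)) (A n - U)" for n
    using assms(2,4) by (metis Diff_subset closedin_closed_subtopology closedin_diff subset_trans)
  moreover have "decseq (\<lambda>n. A n - U)"
    using \<open>decseq A\<close> by (auto simp: decseq_def)
  ultimately have "(\<Inter>n. A n - U) \<noteq> {}"
    using assms(1) nonempty by (intro compact_space_imp_nest) (auto simp: compact_space_subtopology)
  then show False
    using assms(5) by blast
qed

lemma approximative_map_if_coherent:
  assumes "decseq Ys"
    and "\<And>k. continuous_map X (subtopology hilbert_cube (Ys k)) (f k)"
    and "\<And>k. homotopic_in X (Ys k) (f (Suc k)) (f k)"
  shows "approximative_map X Ys f"
proof -
  have "homotopic_in X (Ys N) (f (Suc t)) (f t)" if "N \<le> t" for N t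
    using homotopic_in_mono[OF assms(3)] decseqD[OF assms(1) that] by blast
  then show ?thesis
    unfolding approximative_map_def using assms(2) by blast
qed

lemma approximative_map_coherent_tail:
  assumes "approximative_map X Ys f" "decseq Ys"
  obtains m where "mono m" "\<And>N. N \<le> m N"
    and "\<And>N s t. m N \<le> s \<Longrightarrow> s \<le> t \<Longrightarrow> homotopic_in X (Ys N) (f t) (f s)"
proof -
  obtain M where M: "\<And>N t. M N \<le> t \<Longrightarrow> homotopic_in X (Ys N) (f (Suc t)) (f t)"
    using assms(1) unfolding approximative_map_def by metis
  define m where "m N = N + (\<Sum>i\<le>N. M i)" for N
  have "mono m"
    by (rule monoI) (simp add: m_def add_mono sum_mono2)
  moreover have "N \<le> m N" "M N \<le> m N" for N
    unfolding m_def by (auto intro: order_trans[OF _ le_add2] member_le_sum)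
  moreover have "homotopic_in X (Ys N) (f t) (f s)" if "m N \<le> s" "s \<le> t" for N s t
  proof (rule homotopic_in_chain[OF \<open>s \<le> t\<close>])
    have "Ys s \<subseteq> Ys N"
      using \<open>decseq Ys\<close> \<open>N \<le> m N\<close> that(1) by (simp add: decseq_def)
    then show "continuous_map X (subtopology hilbert_cube (Ys N)) (f s)"
      using assms(1) by (auto simp: approximative_map_def continuous_map_in_subtopology)
    show "homotopic_in X (Ys N) (f (Suc u)) (f u)" if "s \<le> u" for u
      using M \<open>M N \<le> m N\<close> \<open>m N \<le> s\<close> that by (meson order_trans)
  qed
  ultimately show thesis
    using that by blast
qed

theorem proposition9p1:
  fixes X :: "'a topology"
    and Y :: "(nat \<Rightarrow> real) set"
    and Ys :: "nat \<Rightarrow> (nat \<Rightarrow> real) set"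
    and f :: "nat \<Rightarrow> 'a \<Rightarrow> nat \<Rightarrow> real"
  assumes "compactum X"
    and "Y \<subseteq> topspace hilbert_cube" and "compactin hilbert_cube Y"
    and "\<And>k. compactin hilbert_cube (Ys k)"
    and "\<And>k. Y \<subseteq> hilbert_cube interior_of (Ys k)"
    and "\<And>k. prism (subtopology hilbert_cube (Ys k))"
    and "\<And>k. Ys (Suc k) \<subseteq> Ys k"
    and "(\<Inter>k. Ys k) = Y"
    and "approximative_map X Ys f"
  shows "\<exists>f'. approximative_map X Ys f' \<and>
           (\<forall>k. homotopic_in X (Ys k) (f' (Suc k)) (f' k)) \<and>
           approx_homotopic X Y f f'"
proof -
  have "decseq Ys"
    using assms(7) by (simp add: decseq_Suc_iff)
  then obtain m where "mono m" and m_ge: "\<And>N. N \<le> m N"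
    and tail: "\<And>N s t. m N \<le> s \<Longrightarrow> s \<le> t \<Longrightarrow> homotopic_in X (Ys N) (f t) (f s)"
    using approximative_map_coherent_tail assms(9) by blast
  have coherent: "homotopic_in X (Ys k) ((f \<circ> m) (Suc k)) ((f \<circ> m) k)" for k
    using tail[OF order_refl monoD[OF \<open>mono m\<close> le_SucI]] by simp
  have "continuous_map X (subtopology hilbert_cube (Ys k)) ((f \<circ> m) k)" for k
    using tail[OF order_refl order_refl, of k] homotopic_with_imp_continuous_maps
    unfolding homotopic_in_def by fastforce
  then have "approximative_map X Ys (f \<circ> m)"
    using approximative_map_if_coherent[OF \<open>decseq Ys\<close>] coherent by blast
  moreover have "approx_homotopic X Y f (f \<circ> m)"
    unfolding approx_homotopic_def
  proof (intro allI impI)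
    fix V assume "V \<subseteq> topspace hilbert_cube \<and> (\<exists>U. openin hilbert_cube U \<and> Y \<subseteq> U \<and> U \<subseteq> V)"
    then obtain U where U: "openin hilbert_cube U" "Y \<subseteq> U" "U \<subseteq> V"
      by auto
    have "closedin hilbert_cube (Ys k)" for k
      using compactin_imp_closedin[OF Hausdorff_space_hilbert_cube assms(4)] .
    then obtain K where "Ys K \<subseteq> U"
      using decseq_closedin_eventually_subset[OF assms(4) _ \<open>decseq Ys\<close> U(1)] U(2) assms(8)
      by blast
    with U(3) have "Ys K \<subseteq> V"
      by blast
    then have "homotopic_in X V (f k) ((f \<circ> m) k)" if "m K \<le> k" for k
      using homotopic_in_mono[OF tail[OF that m_ge] \<open>Ys K \<subseteq> V\<close>]
      by (simp add: homotopic_in_sym)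
    then show "\<exists>k0. \<forall>k\<ge>k0. homotopic_in X V (f k) ((f \<circ> m) k)"
      by blast
  qed
  ultimately show ?thesis
    using coherent by blast
qed

end
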